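(* Fix $t_+\in\mathbb{C}\setminus(-\infty,-1]$ and $t_-\in\mathbb{C}\setminus[1,\infty)$. For every integer $k\ge0$ and all $a,b\in I$ with $a\prec b$, \[F_a^b(-k)=\frac{1}{k+1}\sum_{j=0}^{k+1}\binom{k+1}{j}B_j\bigl((-1)^jb^{k+1-j}-a^{k+1-j}\bigr),\] where $a,b$ are regarded as complex numbers ($n+t_+$ resp.\ $-n+t_-$), the powers are ordinary integer powers, and $0^0=1$.
   Context: $B_n$ are the Seki–Bernoulli numbers, $ze^z/(e^z-1)=\sum_{n\ge0}B_nz^n/n!$. Let $I_+=\{n+t_+:n\in\mathbb{Z}_{\ge0}\}$, $I_-=\{-n+t_-:n\in\mathbb{Z}_{\ge0}\}$, $I=I_+\amalg I_-$ (formal disjoint union), totally ordered by $t_+\prec1+t_+\prec2+t_+\prec\cdots\prec-2+t_-\prec-1+t_-\prec t_-$. For $a=n+t_+\in I_+$, $a^{-s}=(n+t_+)^{-s}$ (principal branch); for $a=-n+t_-\in I_-$, $a^{-s}$ means $e^{\pi is}(n-t_-)^{-s}$. For $a\prec b$, $F_a^b(s)=\sum_{c\in I,\,a\prec c\prec b}c^{-s}$ ($\Re(s)>1$), extended to an entire function of $s$; $F_a^b(-k)$ is the value of this continuation. *)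

theory Defs
  imports "HOL-Analysis.Analysis" "HOL-Computational_Algebra.Formal_Power_Series"
begin

text \<open>Seki--Bernoulli numbers: z e^z/(e^z - 1) = sum B_n z^n / n!  (so B_1 = +1/2).\<close>
definition seki_bernoulli :: "nat \<Rightarrow> complex" where
  "seki_bernoulli n =
     fact n * fps_nth ((fps_X * fps_exp (1::complex)) div (fps_exp 1 - 1)) n"

text \<open>The index set I = I_+ disjoint-union I_-: Pos n stands for n + t_+, Neg n for -n + t_-.\<close>
datatype idx = Pos nat | Neg nat

fun idx_less :: "idx \<Rightarrow> idx \<Rightarrow> bool" where
  "idx_less (Pos n) (Pos m) = (n < m)"
| "idx_less (Pos n) (Neg m) = True"
| "idx_less (Neg n) (Pos m) = False"
| "idx_less (Neg n) (Neg m) = (m < n)"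

fun idx_val :: "complex \<Rightarrow> complex \<Rightarrow> idx \<Rightarrow> complex" where
  "idx_val tp tm (Pos n) = of_nat n + tp"
| "idx_val tp tm (Neg n) = - of_nat n + tm"

fun idx_pow :: "complex \<Rightarrow> complex \<Rightarrow> idx \<Rightarrow> complex \<Rightarrow> complex" where
  "idx_pow tp tm (Pos n) s = (of_nat n + tp) powr (- s)"
| "idx_pow tp tm (Neg n) s = exp (pi * \<i> * s) * (of_nat n - tm) powr (- s)"

definition idx_between :: "idx \<Rightarrow> idx \<Rightarrow> idx set" where
  "idx_between a b = {c. idx_less a c \<and> idx_less c b}"

end

theory Submission
  imports Defs "HOL-Complex_Analysis.Complex_Analysis"
begin

(* On I_+ the sum is a shifted Hurwitz series sum_m (m + 1 + a)^(-s), on I_- it is e^(pi i s) times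
   another one, and between two points of the same half it is a finite sum.  A shifted Hurwitz series
   is continued by the Euler-Maclaurin formula: if g_0 is a primitive of u^(-s) and g_(j+1) = g_j', then
   Taylor's theorem together with B(z) (e^z - 1) = z e^z for the Bernoulli generating function B shows
   (u + 1)^(-s) - sum_(j <= K) B_j (g_j (u + 1) - g_j u) = O(u^(-Re s - K - 1)).  Summed over u = a + n
   this is holomorphic for Re s > -K, while the B_j-terms telescope.  At s = -k the remainders vanish,
   because the (k+2)-nd derivative of u^(k+1) is zero, so only Bernoulli polynomials at the endpoints
   remain.  The poles at s = 1 of the two halves of an unbounded interval cancel since e^(pi i) = -1,
   and finite intervals reduce to Faulhaber's formula. *)

section \<open>Bernoulli numbers and polynomials\<close>

definition bernoulli_fps :: "complex fps" where
  "bernoulli_fps = (fps_X * fps_exp 1) div (fps_exp 1 - 1)"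

lemma seki_bernoulli_conv_fps: "seki_bernoulli n = fact n * bernoulli_fps $ n"
  by (simp add: seki_bernoulli_def bernoulli_fps_def)

lemma fps_exp_1_minus_1_nonzero: "fps_exp (1::complex) - 1 \<noteq> 0"
proof
  assume "fps_exp (1::complex) - 1 = 0"
  then have "(fps_exp (1::complex) - 1) $ 1 = 0" by simp
  then show False by simp
qed

lemma bernoulli_fps_times_exp_minus_1: "bernoulli_fps * (fps_exp 1 - 1) = fps_X * fps_exp 1"
proof -
  have "subdegree (fps_exp (1::complex) - 1) = 1"
    by (rule subdegreeI) auto
  then show ?thesis
    unfolding bernoulli_fps_def using fps_exp_1_minus_1_nonzero
    by (intro fps_times_divide_eq) (auto simp: subdegree_mult)
qed

lemma bernoulli_fps_recurrence: "(\<Sum>j\<le>r. bernoulli_fps $ j / fact (Suc r - j)) = 1 / fact r"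
proof -
  have "1 / fact r = (fps_X * fps_exp (1::complex)) $ Suc r"
    by simp
  also have "\<dots> = (\<Sum>i=0..Suc r. bernoulli_fps $ i * (fps_exp 1 - 1) $ (Suc r - i))"
    by (simp only: bernoulli_fps_times_exp_minus_1 [symmetric] fps_mult_nth)
  also have "\<dots> = (\<Sum>j\<le>r. bernoulli_fps $ j / fact (Suc r - j))"
    by (auto simp: sum.atLeast0_atMost_Suc atLeast0AtMost divide_inverse intro!: sum.cong)
  finally show ?thesis ..
qed

lemma bernoulli_fps_nth_0: "bernoulli_fps $ 0 = 1"
  using bernoulli_fps_recurrence [of 0] by simp

lemma seki_bernoulli_0: "seki_bernoulli 0 = 1"
  by (simp add: seki_bernoulli_conv_fps bernoulli_fps_nth_0)

lemma bernoulli_fps_compose_uminus: "bernoulli_fps oo - fps_X = bernoulli_fps * fps_exp (-1)"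
proof -
  have exp_inverse: "fps_exp (-1::complex) * fps_exp 1 = 1" "fps_exp (1::complex) * fps_exp (-1) = 1"
    by (simp_all flip: fps_exp_add_mult)
  \<comment> \<open>both sides are the unique \<open>f\<close> with \<open>f * (fps_exp 1 - 1) = fps_X\<close>\<close>
  have reflected: "(bernoulli_fps oo - fps_X) * (fps_exp (-1) - 1) = - fps_X * fps_exp (-1)"
    using arg_cong [OF bernoulli_fps_times_exp_minus_1, of "\<lambda>f. f oo - fps_X"]
    by (simp add: fps_compose_mult_distrib fps_compose_sub_distrib)
  have "(fps_exp (-1) - 1) * - fps_exp 1 = fps_exp 1 - (1::complex fps)"
    by (simp add: algebra_simps exp_inverse)
  then have "(bernoulli_fps oo - fps_X) * (fps_exp 1 - 1)
      = (bernoulli_fps oo - fps_X) * (fps_exp (-1) - 1) * - fps_exp 1"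
    by (simp only: mult.assoc)
  also have "\<dots> = fps_X"
    by (simp add: reflected mult.assoc exp_inverse)
  finally have "(bernoulli_fps oo - fps_X) * (fps_exp 1 - 1) = fps_X" .
  moreover have "bernoulli_fps * fps_exp (-1) * (fps_exp 1 - 1) = fps_X"
  proof -
    have "bernoulli_fps * fps_exp (-1) * (fps_exp 1 - 1) = bernoulli_fps * (fps_exp 1 - 1) * fps_exp (-1)"
      by (simp only: ac_simps)
    also have "\<dots> = fps_X * (fps_exp 1 * fps_exp (-1))"
      by (simp only: bernoulli_fps_times_exp_minus_1 mult.assoc)
    finally show ?thesis
      by (simp add: exp_inverse)
  qed
  ultimately show ?thesis
    by (metis mult_right_cancel fps_exp_1_minus_1_nonzero)
qed

definition seki_bernoulli_poly :: "nat \<Rightarrow> complex \<Rightarrow> complex" where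
  "seki_bernoulli_poly n x = (\<Sum>j=0..n. of_nat (n choose j) * seki_bernoulli j * x ^ (n - j))"

lemma seki_bernoulli_poly_conv_fps:
  "seki_bernoulli_poly n x = fact n * (bernoulli_fps * fps_exp x) $ n"
  unfolding seki_bernoulli_poly_def fps_mult_nth sum_distrib_left
  by (intro sum.cong refl) (auto simp: binomial_fact seki_bernoulli_conv_fps field_simps)

lemma seki_bernoulli_poly_Suc_diff:
  "seki_bernoulli_poly (Suc k) (x + 1) - seki_bernoulli_poly (Suc k) x = of_nat (Suc k) * (x + 1) ^ k"
proof -
  have "bernoulli_fps * fps_exp (x + 1) - bernoulli_fps * fps_exp x
      = bernoulli_fps * (fps_exp 1 - 1) * fps_exp x"
    by (simp add: fps_exp_add_mult algebra_simps)
  also have "\<dots> = fps_X * fps_exp (x + 1)"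
    by (simp add: bernoulli_fps_times_exp_minus_1 fps_exp_add_mult mult_ac)
  finally have exp_diff: "bernoulli_fps * fps_exp (x + 1) - bernoulli_fps * fps_exp x
      = fps_X * fps_exp (x + 1)" .
  have "seki_bernoulli_poly (Suc k) (x + 1) - seki_bernoulli_poly (Suc k) x
      = fact (Suc k) * (bernoulli_fps * fps_exp (x + 1) - bernoulli_fps * fps_exp x) $ Suc k"
    by (simp add: seki_bernoulli_poly_conv_fps right_diff_distrib)
  also have "\<dots> = fact (Suc k) * ((x + 1) ^ k / fact k)"
    by (simp add: exp_diff)
  also have "\<dots> = of_nat (Suc k) * (x + 1) ^ k"
    by (simp only: fact_Suc) simp
  finally show ?thesis .
qed

lemma seki_bernoulli_poly_reflect:
  "seki_bernoulli_poly n (x - 1) = (-1) ^ n * seki_bernoulli_poly n (- x)"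
proof -
  have "bernoulli_fps * fps_exp (x - 1) = (bernoulli_fps * fps_exp (- x)) oo - fps_X"
    by (simp add: fps_compose_mult_distrib bernoulli_fps_compose_uminus mult.assoc
        flip: fps_exp_add_mult)
  then show ?thesis
    by (simp add: seki_bernoulli_poly_conv_fps fps_compose_uminus')
qed

lemma sum_shifted_powers:
  "(\<Sum>m<L. (of_nat (Suc m) + a) ^ k)
     = (seki_bernoulli_poly (Suc k) (a + of_nat L) - seki_bernoulli_poly (Suc k) a) / of_nat (Suc k)"
proof (induction L)
  case (Suc L)
  have "seki_bernoulli_poly (Suc k) (a + of_nat (Suc L))
      = seki_bernoulli_poly (Suc k) (a + of_nat L) + of_nat (Suc k) * (of_nat (Suc L) + a) ^ k"
    using seki_bernoulli_poly_Suc_diff [of k "a + of_nat L"] by (simp add: algebra_simps)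
  with Suc.IH show ?case
    by (simp add: field_simps del: of_nat_Suc)
qed simp

definition bernoulli_endpoint_sum :: "nat \<Rightarrow> complex \<Rightarrow> complex \<Rightarrow> complex" where
  "bernoulli_endpoint_sum k x y = 1 / of_nat (k + 1) *
     (\<Sum>j = 0..k + 1. of_nat ((k + 1) choose j) * seki_bernoulli j *
        ((-1) ^ j * y ^ (k + 1 - j) - x ^ (k + 1 - j)))"

lemma bernoulli_endpoint_sum_eq:
  "bernoulli_endpoint_sum k x y
     = ((-1) ^ Suc k * seki_bernoulli_poly (Suc k) (- y) - seki_bernoulli_poly (Suc k) x) / of_nat (Suc k)"
proof -
  have sign: "(-1) ^ Suc k * (c * (- y) ^ (Suc k - j)) = c * ((-1) ^ j * y ^ (Suc k - j))"
    if "j \<le> Suc k" for j c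
  proof -
    have "(-1::complex) ^ Suc k = (-1) ^ j * (-1) ^ (Suc k - j)"
      using that by (simp flip: power_add)
    then have "(-1) ^ Suc k * (- y) ^ (Suc k - j) = (-1) ^ j * y ^ (Suc k - j)"
      by (simp add: power_minus [of y] mult.assoc minus_one_mult_self)
    then show ?thesis
      by (simp add: mult.left_commute)
  qed
  have "(-1) ^ Suc k * seki_bernoulli_poly (Suc k) (- y)
      = (\<Sum>j=0..Suc k. of_nat (Suc k choose j) * seki_bernoulli j * ((-1) ^ j * y ^ (Suc k - j)))"
    unfolding seki_bernoulli_poly_def sum_distrib_left
    by (intro sum.cong refl sign) simp
  then show ?thesis
    by (simp add: bernoulli_endpoint_sum_def seki_bernoulli_poly_def sum_subtractf right_diff_distrib
        diff_divide_distrib)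
qed

lemma sum_shifted_powers_eq_bernoulli_endpoint_sum:
  assumes "y = x + of_nat L + 1"
  shows "(\<Sum>m<L. (of_nat (Suc m) + x) ^ k) = bernoulli_endpoint_sum k x y"
proof -
  have "seki_bernoulli_poly (Suc k) (x + of_nat L) = (-1) ^ Suc k * seki_bernoulli_poly (Suc k) (- y)"
    using seki_bernoulli_poly_reflect [of _ y] assms by simp
  then show ?thesis
    by (simp add: bernoulli_endpoint_sum_eq sum_shifted_powers del: of_nat_Suc)
qed

section \<open>The Euler--Maclaurin remainder\<close>

lemma bernoulli_fps_taylor_sum:
  fixes c :: "nat \<Rightarrow> complex"
  shows "(\<Sum>j\<le>K. bernoulli_fps $ j * ((\<Sum>i\<le>Suc K - j. c (j + i) / fact i) - c j))
           = (\<Sum>i\<le>K. c (Suc i) / fact i)"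
proof (induction K)
  case 0
  then show ?case by (simp add: bernoulli_fps_nth_0)
next
  case (Suc K)
  have split_top: "(\<Sum>i\<le>Suc (Suc K) - j. c (j + i) / fact i)
      = (\<Sum>i\<le>Suc K - j. c (j + i) / fact i) + c (Suc (Suc K)) / fact (Suc (Suc K) - j)"
    if "j \<le> Suc K" for j
    using that by (simp add: Suc_diff_le sum.atMost_Suc)
  have "(\<Sum>j\<le>Suc K. bernoulli_fps $ j * ((\<Sum>i\<le>Suc (Suc K) - j. c (j + i) / fact i) - c j))
      = (\<Sum>j\<le>Suc K. bernoulli_fps $ j * ((\<Sum>i\<le>Suc K - j. c (j + i) / fact i) - c j)
           + c (Suc (Suc K)) * (bernoulli_fps $ j / fact (Suc (Suc K) - j)))"
    by (intro sum.cong refl) (simp add: split_top algebra_simps)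
  also have "\<dots> = (\<Sum>j\<le>Suc K. bernoulli_fps $ j * ((\<Sum>i\<le>Suc K - j. c (j + i) / fact i) - c j))
        + c (Suc (Suc K)) * (\<Sum>j\<le>Suc K. bernoulli_fps $ j / fact (Suc (Suc K) - j))"
    by (simp only: sum.distrib sum_distrib_left)
  also have "(\<Sum>j\<le>Suc K. bernoulli_fps $ j / fact (Suc (Suc K) - j)) = 1 / fact (Suc K)"
    by (rule bernoulli_fps_recurrence)
  also have "(\<Sum>j\<le>Suc K. bernoulli_fps $ j * ((\<Sum>i\<le>Suc K - j. c (j + i) / fact i) - c j))
      = (\<Sum>i\<le>K. c (Suc i) / fact i)"
    by (simp add: sum.atMost_Suc Suc.IH)
  finally show ?case
    by (simp add: sum.atMost_Suc)
qed

lemma euler_maclaurin_step: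
  fixes g :: "nat \<Rightarrow> complex \<Rightarrow> complex"
  assumes S: "convex S" "u \<in> S" "u + 1 \<in> S"
    and deriv: "\<And>i v. v \<in> S \<Longrightarrow> i \<le> K + 1 \<Longrightarrow>
                  (g i has_field_derivative g (Suc i) v) (at v within S)"
    and bound: "\<And>v. v \<in> S \<Longrightarrow> norm (g (K + 2) v) \<le> B"
  shows "norm (g 1 (u + 1) - (g 0 (u + 1) - g 0 u) - (\<Sum>j=1..K. bernoulli_fps $ j * (g j (u + 1) - g j u)))
           \<le> (2 + (\<Sum>j=1..K. norm (bernoulli_fps $ j))) * B"
proof -
  have "0 \<le> B"
    using bound [OF S(2)] norm_ge_zero order_trans by blast
  define T where "T j = (\<Sum>i\<le>Suc K - j. g (j + i) u / fact i)" for j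
  define e where "e j = g j (u + 1) - T j" for j
  have taylor: "norm (e j) \<le> B" if "j \<le> Suc K" for j
  proof -
    have "norm ((\<lambda>i. g (j + i)) 0 (u + 1)
          - (\<Sum>i\<le>Suc K - j. (\<lambda>i. g (j + i)) i u * ((u + 1) - u) ^ i / fact i))
          \<le> B * norm ((u + 1) - u) ^ Suc (Suc K - j) / fact (Suc K - j)"
    proof (rule complex_Taylor [OF S(1) _ _ S(2,3)])
      show "((\<lambda>i. g (j + i)) i has_field_derivative (\<lambda>i. g (j + i)) (Suc i) v) (at v within S)"
        if "v \<in> S" "i \<le> Suc K - j" for i v
        using deriv [of v "j + i"] that \<open>j \<le> Suc K\<close> by simp
      show "norm ((\<lambda>i. g (j + i)) (Suc (Suc K - j)) v) \<le> B" if "v \<in> S" for v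
        using bound [OF that] \<open>j \<le> Suc K\<close> by (simp add: Suc_diff_le)
    qed
    also have "\<dots> \<le> B"
      using \<open>0 \<le> B\<close> by (simp add: divide_le_eq fact_ge_1 mult_le_cancel_left1)
    finally show ?thesis
      by (simp add: e_def T_def)
  qed
  have "T 1 = (\<Sum>j\<le>K. bernoulli_fps $ j * (T j - g j u))"
    using bernoulli_fps_taylor_sum [of "\<lambda>i. g i u" K] by (simp add: T_def)
  also have "\<dots> = (T 0 - g 0 u) + (\<Sum>j=1..K. bernoulli_fps $ j * (T j - g j u))"
    by (simp add: bernoulli_fps_nth_0 atMost_atLeast0 sum.atLeast_Suc_atMost)
  finally have "T 1 = (T 0 - g 0 u) + (\<Sum>j=1..K. bernoulli_fps $ j * (T j - g j u))" .
  then have "g 1 (u + 1) - (g 0 (u + 1) - g 0 u) - (\<Sum>j=1..K. bernoulli_fps $ j * (g j (u + 1) - g j u))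
      = e 1 - e 0 - (\<Sum>j=1..K. bernoulli_fps $ j * e j)"
    by (simp add: e_def algebra_simps sum_subtractf)
  also have "norm \<dots> \<le> norm (e 1) + norm (e 0) + (\<Sum>j=1..K. norm (bernoulli_fps $ j) * norm (e j))"
    by (rule order_trans [OF norm_triangle_ineq4])
      (auto intro!: add_mono order_trans [OF norm_triangle_ineq4] order_trans [OF norm_sum]
        simp: norm_mult)
  also have "\<dots> \<le> B + B + (\<Sum>j=1..K. norm (bernoulli_fps $ j) * B)"
    by (intro add_mono sum_mono mult_left_mono taylor) auto
  finally show ?thesis
    by (simp add: algebra_simps sum_distrib_left)
qed

(* The j-th derivative of a primitive of u powr (- s).  At s = 1 the primitive is Ln u: this is the
   value that makes differences of primitives entire in s. *)
definition prim_powr_deriv :: "complex \<Rightarrow> nat \<Rightarrow> complex \<Rightarrow> complex" where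
  "prim_powr_deriv s j u =
     (if j = 0 then (if s = 1 then Ln u else u powr (1 - s) / (1 - s))
      else (-1) ^ (j - 1) * pochhammer s (j - 1) * u powr (1 - s - of_nat j))"

lemma prim_powr_deriv_1: "prim_powr_deriv s 1 u = u powr (- s)"
  by (simp add: prim_powr_deriv_def)

lemma has_field_derivative_prim_powr_deriv:
  assumes "0 < Re u"
  shows "(prim_powr_deriv s j has_field_derivative prim_powr_deriv s (Suc j) u) (at u)"
proof -
  have u: "u \<notin> \<real>\<^sub>\<le>\<^sub>0"
    using assms by (auto simp: complex_nonpos_Reals_iff)
  have "((\<lambda>u. c * u powr e) has_field_derivative c * (e * u powr (e - 1))) (at u)" for c e
    by (intro DERIV_cmult has_field_derivative_powr [OF u])
  note powr_deriv = this [of "(-1) ^ (j - 1) * pochhammer s (j - 1)" "1 - s - of_nat j"]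
    this [of "1 / (1 - s)" "1 - s"]
  have Ln_deriv: "(Ln has_field_derivative u powr (-1)) (at u)"
    using has_field_derivative_Ln [OF u] u by (simp add: powr_minus powr_to_1 [of u] flip: powr_one)
  show ?thesis
  proof (cases j)
    case 0
    show ?thesis
    proof (cases "s = 1")
      case True
      then have "prim_powr_deriv s j = Ln"
        using 0 by (auto simp: prim_powr_deriv_def)
      with Ln_deriv True 0 show ?thesis
        by (simp add: prim_powr_deriv_def)
    next
      case False
      then have "prim_powr_deriv s j = (\<lambda>u. 1 / (1 - s) * u powr (1 - s))"
        using 0 by (auto simp: prim_powr_deriv_def)
      with powr_deriv(2) False 0 show ?thesis
        by (simp add: prim_powr_deriv_def)
    qed
  next
    case (Suc i)
    then have "prim_powr_deriv s j = (\<lambda>u. (-1) ^ (j - 1) * pochhammer s (j - 1) * u powr (1 - s - of_nat j))"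
      by (auto simp: prim_powr_deriv_def)
    moreover have "1 - s - of_nat j - 1 = 1 - s - of_nat (Suc j)"
      by simp
    ultimately show ?thesis
      using powr_deriv(1) Suc by (simp only:) (simp add: prim_powr_deriv_def pochhammer_Suc algebra_simps)
  qed
qed

lemma holomorphic_prim_powr_deriv:
  assumes "j \<noteq> 0"
  shows "(\<lambda>s. prim_powr_deriv s j w) holomorphic_on UNIV"
  using assms unfolding prim_powr_deriv_def by (simp, intro holomorphic_intros)

lemma holomorphic_prim_powr_deriv_0_diff:
  assumes "w \<noteq> 0" "v \<noteq> 0"
  shows "(\<lambda>s. prim_powr_deriv s 0 w - prim_powr_deriv s 0 v) holomorphic_on UNIV"
proof -
  define h where "h s = exp ((1 - s) * Ln w) - exp ((1 - s) * Ln v)" for s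
  have "h holomorphic_on UNIV"
    unfolding h_def by (intro holomorphic_intros)
  then have "(\<lambda>z. if z = 1 then deriv h 1 else (h z - h 1) / (z - 1)) holomorphic_on UNIV"
    by (rule pole_lemma) simp
  then have "(\<lambda>z. - (if z = 1 then deriv h 1 else (h z - h 1) / (z - 1))) holomorphic_on UNIV"
    by (intro holomorphic_intros)
  also have "(\<lambda>z. - (if z = 1 then deriv h 1 else (h z - h 1) / (z - 1)))
      = (\<lambda>s. prim_powr_deriv s 0 w - prim_powr_deriv s 0 v)"
  proof
    fix z
    show "- (if z = 1 then deriv h 1 else (h z - h 1) / (z - 1))
        = prim_powr_deriv z 0 w - prim_powr_deriv z 0 v"
    proof (cases "z = 1")
      case True
      have "deriv h 1 = Ln v - Ln w"
        unfolding h_def by (rule DERIV_imp_deriv) (rule derivative_eq_intros refl | simp)+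
      with True show ?thesis
        by (simp add: prim_powr_deriv_def)
    next
      case False
      have "h 1 = 0"
        by (simp add: h_def)
      with False have "- ((h z - h 1) / (z - 1)) = h z / (1 - z)"
        by (simp add: field_simps)
      moreover have "h z = w powr (1 - z) - v powr (1 - z)"
        using assms by (simp add: h_def powr_def mult.commute)
      ultimately show ?thesis
        using False by (simp add: prim_powr_deriv_def diff_divide_distrib)
    qed
  qed
  finally show ?thesis .
qed

lemma norm_powr_le: "norm (v powr e) \<le> norm v powr Re e * exp (\<bar>Im e\<bar> * pi)"
proof -
  have "\<bar>Im e\<bar> * \<bar>Arg v\<bar> \<le> \<bar>Im e\<bar> * pi"
    using Arg_bounded [of v] by (intro mult_left_mono) auto
  moreover have "- Im e * Arg v \<le> \<bar>Im e\<bar> * \<bar>Arg v\<bar>"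
    by (metis abs_ge_self abs_minus_cancel abs_mult)
  ultimately show ?thesis
    by (simp add: norm_powr_complex mult_left_mono)
qed

lemma norm_prim_powr_deriv_le:
  assumes "0 < r" "r \<le> norm v" "0 < Re s + of_nat K + 1"
  shows "norm (prim_powr_deriv s (K + 2) v)
           \<le> norm (pochhammer s (K + 1)) * r powr (- (Re s + of_nat K + 1)) * exp (\<bar>Im s\<bar> * pi)"
proof -
  have "norm (v powr (1 - s - of_nat (K + 2))) \<le> norm v powr (- (Re s + of_nat K + 1)) * exp (\<bar>Im s\<bar> * pi)"
    using norm_powr_le [of v "1 - s - of_nat (K + 2)"] by simp
  also have "\<dots> \<le> r powr (- (Re s + of_nat K + 1)) * exp (\<bar>Im s\<bar> * pi)"
    using assms by (intro mult_right_mono powr_mono2') auto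
  finally show ?thesis
    by (simp add: prim_powr_deriv_def norm_mult norm_power mult.assoc mult_left_mono)
qed

lemma bernoulli_fps_times_prim_powr_deriv_minus_of_nat:
  assumes "1 \<le> j" "j \<le> Suc k" "P \<noteq> 0"
  shows "bernoulli_fps $ j * prim_powr_deriv (- of_nat k) j P
           = of_nat (Suc k choose j) * seki_bernoulli j * P ^ (Suc k - j) / of_nat (Suc k)"
proof -
  have pochhammer_eq: "(-1) ^ (j - 1) * pochhammer (- of_nat k) (j - 1) = fact (j - 1) * (of_nat (k choose (j - 1)) :: complex)"
    by (simp add: binomial_gbinomial gbinomial_pochhammer)
  have exponent: "1 - (- of_nat k) - of_nat j = (of_nat (Suc k - j) :: complex)"
    using assms by (simp add: of_nat_diff)
  have "prim_powr_deriv (- of_nat k) j P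
      = (-1) ^ (j - 1) * pochhammer (- of_nat k) (j - 1) * P powr (1 - (- of_nat k) - of_nat j)"
    using assms by (simp add: prim_powr_deriv_def)
  also have "\<dots> = fact (j - 1) * of_nat (k choose (j - 1)) * P ^ (Suc k - j)"
    unfolding pochhammer_eq exponent using assms(3) by (simp add: powr_nat')
  finally have prim_eq: "prim_powr_deriv (- of_nat k) j P = fact (j - 1) * of_nat (k choose (j - 1)) * P ^ (Suc k - j)" .
  have "j * (Suc k choose j) = Suc k * (k choose (j - 1))"
    using Suc_times_binomial [of "j - 1" k] assms(1) by simp
  then have binom: "of_nat j * of_nat (Suc k choose j) = (of_nat (Suc k) * of_nat (k choose (j - 1)) :: complex)"
    by (metis of_nat_mult)
  have "of_nat (Suc k choose j) * seki_bernoulli j * P ^ (Suc k - j) / of_nat (Suc k)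
      = (of_nat j * of_nat (Suc k choose j)) * fact (j - 1) * bernoulli_fps $ j * P ^ (Suc k - j) / of_nat (Suc k)"
    using assms(1) by (simp add: seki_bernoulli_conv_fps fact_reduce [of j] mult_ac)
  also have "\<dots> = bernoulli_fps $ j * prim_powr_deriv (- of_nat k) j P"
    unfolding binom prim_eq by (simp del: of_nat_Suc)
  finally show ?thesis ..
qed

definition em_remainder :: "nat \<Rightarrow> complex \<Rightarrow> complex \<Rightarrow> complex" where
  "em_remainder K s v = prim_powr_deriv s 1 (v + 1) - (prim_powr_deriv s 0 (v + 1) - prim_powr_deriv s 0 v)
     - (\<Sum>j=1..K. bernoulli_fps $ j * (prim_powr_deriv s j (v + 1) - prim_powr_deriv s j v))"

lemma norm_em_remainder_le:
  assumes "0 < r" "r \<le> Re v" "0 < Re s + of_nat K + 1"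
  shows "norm (em_remainder K s v) \<le> (2 + (\<Sum>j=1..K. norm (bernoulli_fps $ j)))
           * (norm (pochhammer s (K + 1)) * r powr (- (Re s + of_nat K + 1)) * exp (\<bar>Im s\<bar> * pi))"
proof -
  define S where "S = {v. r \<le> Re v}"
  show ?thesis
    unfolding em_remainder_def
  proof (rule euler_maclaurin_step)
    show "convex S"
      unfolding S_def by (rule convex_halfspace_Re_ge)
    show "v \<in> S" "v + 1 \<in> S"
      using assms(2) by (simp_all add: S_def)
  next
    fix i w assume "w \<in> S"
    then have "0 < Re w"
      using assms(1) by (simp add: S_def)
    then show "(prim_powr_deriv s i has_field_derivative prim_powr_deriv s (Suc i) w) (at w within S)"
      by (rule has_field_derivative_at_within [OF has_field_derivative_prim_powr_deriv])
  next
    fix w assume "w \<in> S"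
    then have "r \<le> norm w"
      using complex_Re_le_cmod [of w] by (simp add: S_def)
    with assms(1,3) show "norm (prim_powr_deriv s (K + 2) w)
        \<le> norm (pochhammer s (K + 1)) * r powr (- (Re s + of_nat K + 1)) * exp (\<bar>Im s\<bar> * pi)"
      by (intro norm_prim_powr_deriv_le)
  qed
qed

lemma em_remainder_minus_of_nat:
  assumes "0 < Re v"
  shows "em_remainder (Suc k) (- of_nat k) v = 0"
  using norm_em_remainder_le [OF assms order.refl, of "- of_nat k" "Suc k"]
  by (simp add: pochhammer_of_nat_eq_0_lemma)

lemma holomorphic_em_remainder:
  assumes "0 < Re v"
  shows "(\<lambda>s. em_remainder K s v) holomorphic_on UNIV"
proof -
  have "v + 1 \<noteq> 0" "v \<noteq> 0"
    using assms by (auto simp: complex_eq_iff)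
  then have "(\<lambda>s. prim_powr_deriv s 0 (v + 1) - prim_powr_deriv s 0 v) holomorphic_on UNIV"
    by (rule holomorphic_prim_powr_deriv_0_diff)
  moreover have "(\<lambda>s. \<Sum>j=1..K. bernoulli_fps $ j * (prim_powr_deriv s j (v + 1) - prim_powr_deriv s j v))
      holomorphic_on UNIV"
    by (intro holomorphic_intros holomorphic_prim_powr_deriv) auto
  ultimately show ?thesis
    unfolding em_remainder_def
    by (intro holomorphic_on_diff [OF holomorphic_on_diff] holomorphic_prim_powr_deriv) auto
qed

lemma em_remainder_telescope:
  "em_remainder K s v = (v + 1) powr (- s)
     - ((prim_powr_deriv s 0 (v + 1) + (\<Sum>j=1..K. bernoulli_fps $ j * prim_powr_deriv s j (v + 1)))
        - (prim_powr_deriv s 0 v + (\<Sum>j=1..K. bernoulli_fps $ j * prim_powr_deriv s j v)))"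
  unfolding em_remainder_def prim_powr_deriv_1 by (simp add: algebra_simps sum_subtractf)

section \<open>Continuation of shifted Hurwitz series\<close>

lemma norm_pochhammer_le:
  fixes y :: complex
  assumes "norm y \<le> R"
  shows "norm (pochhammer y n) \<le> pochhammer R n"
proof (induction n)
  case (Suc n)
  have "norm (y + of_nat n) \<le> R + of_nat n"
    using norm_triangle_ineq [of y "of_nat n"] assms by simp
  with Suc.IH have "norm (pochhammer y n) * norm (y + of_nat n) \<le> pochhammer R n * (R + of_nat n)"
    using norm_ge_zero order_trans by (intro mult_mono) blast+
  then show ?case
    by (simp add: pochhammer_Suc norm_mult)
qed simp

lemma norm_em_remainder_le_uniform:
  assumes "0 < Re a" "1 \<le> n" "norm y \<le> R" "0 < d" "d \<le> Re y + real K"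
  shows "norm (em_remainder K y (a + of_nat n))
           \<le> (2 + (\<Sum>j=1..K. norm (bernoulli_fps $ j))) * pochhammer R (K + 1) * exp (R * pi)
              * real n powr (- (1 + d))"
proof -
  define C where "C = 2 + (\<Sum>j=1..K. norm (bernoulli_fps $ j))"
  define r where "r = Re a + real n"
  have "0 \<le> C"
    unfolding C_def by (intro add_nonneg_nonneg sum_nonneg) auto
  have "0 \<le> pochhammer R (K + 1)"
    using norm_pochhammer_le [OF assms(3)] norm_ge_zero order_trans by blast
  have "1 \<le> r" "real n \<le> r"
    using assms(1,2) by (auto simp: r_def)
  have "r powr (- (Re y + real K + 1)) \<le> r powr (- (1 + d))"
    using \<open>1 \<le> r\<close> assms(5) by (intro powr_mono) auto
  also have "\<dots> \<le> real n powr (- (1 + d))"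
    using \<open>real n \<le> r\<close> assms(2,4) by (intro powr_mono2') auto
  finally have r_le: "r powr (- (Re y + real K + 1)) \<le> real n powr (- (1 + d))" .
  have exp_le: "exp (\<bar>Im y\<bar> * pi) \<le> exp (R * pi)"
    using abs_Im_le_cmod [of y] assms(3) by simp
  have poch_r_le: "norm (pochhammer y (K + 1)) * r powr (- (Re y + real K + 1))
      \<le> pochhammer R (K + 1) * real n powr (- (1 + d))"
    using norm_pochhammer_le [OF assms(3)] r_le \<open>0 \<le> pochhammer R (K + 1)\<close>
    by (rule mult_mono) simp
  have "0 \<le> pochhammer R (K + 1) * real n powr (- (1 + d))"
    using \<open>0 \<le> pochhammer R (K + 1)\<close> by (rule mult_nonneg_nonneg) simp
  with poch_r_le exp_le have "norm (pochhammer y (K + 1)) * r powr (- (Re y + real K + 1)) * exp (\<bar>Im y\<bar> * pi)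
      \<le> pochhammer R (K + 1) * real n powr (- (1 + d)) * exp (R * pi)"
    by (intro mult_mono [OF poch_r_le exp_le]) simp_all
  then have "C * (norm (pochhammer y (K + 1)) * r powr (- (Re y + real K + 1)) * exp (\<bar>Im y\<bar> * pi))
      \<le> C * (pochhammer R (K + 1) * real n powr (- (1 + d)) * exp (R * pi))"
    using \<open>0 \<le> C\<close> by (rule mult_left_mono)
  moreover have "norm (em_remainder K y (a + of_nat n))
      \<le> C * (norm (pochhammer y (K + 1)) * r powr (- (Re y + real K + 1)) * exp (\<bar>Im y\<bar> * pi))"
    unfolding C_def using assms \<open>1 \<le> r\<close> by (intro norm_em_remainder_le) (auto simp: r_def)
  ultimately show ?thesis
    by (simp add: C_def mult_ac)
qed

lemma em_remainder_locally_dominated: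
  assumes "0 < Re a" "- real K < Re x"
  shows "\<exists>d h. 0 < d \<and> summable h \<and>
           (\<forall>\<^sub>F n in sequentially. \<forall>y\<in>ball x d. norm (em_remainder K y (a + of_nat n)) \<le> h n)"
proof -
  define d where "d = (Re x + real K) / 2"
  define R where "R = norm x + d"
  define h where "h n = (2 + (\<Sum>j=1..K. norm (bernoulli_fps $ j))) * pochhammer R (K + 1) * exp (R * pi)
    * real n powr (- (1 + d))" for n
  have "0 < d"
    using assms(2) by (simp add: d_def)
  then have "summable h"
    unfolding h_def by (intro summable_mult) (simp add: summable_real_powr_iff)
  have "norm (em_remainder K y (a + of_nat n)) \<le> h n" if "1 \<le> n" "y \<in> ball x d" for n y
  proof -
    have "norm (x - y) < d"
      using that by (simp add: dist_norm)
    moreover have "norm y - norm x \<le> norm (x - y)"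
      using norm_triangle_ineq2 [of y x] by (simp add: norm_minus_commute)
    ultimately have "norm y \<le> R"
      using R_def by linarith
    have "Re x - Re y \<le> norm (x - y)"
      using complex_Re_le_cmod [of "x - y"] by simp
    with \<open>norm (x - y) < d\<close> have "d \<le> Re y + real K"
      unfolding d_def by (simp add: field_simps)
    show ?thesis
      unfolding h_def using assms(1) that(1) \<open>norm y \<le> R\<close> \<open>0 < d\<close> \<open>d \<le> Re y + real K\<close>
      by (rule norm_em_remainder_le_uniform)
  qed
  then have "\<forall>\<^sub>F n in sequentially. \<forall>y\<in>ball x d. norm (em_remainder K y (a + of_nat n)) \<le> h n"
    by (intro eventually_sequentiallyI [of 1]) blast
  with \<open>0 < d\<close> \<open>summable h\<close> show ?thesis
    by blast
qed

definition em_remainder_sum :: "complex \<Rightarrow> nat \<Rightarrow> complex \<Rightarrow> complex" where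
  "em_remainder_sum a K s = (\<Sum>n. em_remainder K s (a + of_nat n))"

lemma em_remainder_series:
  assumes "0 < Re a"
  shows "em_remainder_sum a K holomorphic_on {s. - real K < Re s}"
    and "- real K < Re s \<Longrightarrow> (\<lambda>n. em_remainder K s (a + of_nat n)) sums em_remainder_sum a K s"
proof -
  let ?S = "{s. - real K < Re s}"
  have "\<exists>g g'. \<forall>x\<in>?S. ((\<lambda>n. em_remainder K x (a + of_nat n)) sums g x)
      \<and> ((\<lambda>n. deriv (\<lambda>s. em_remainder K s (a + of_nat n)) x) sums g' x)
      \<and> (g has_field_derivative g' x) (at x)"
  proof (rule series_and_derivative_comparison_local [OF open_halfspace_Re_gt])
    have "0 < Re (a + of_nat n)" for n
      using assms by simp
    then show "((\<lambda>s. em_remainder K s (a + of_nat n)) has_field_derivative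
        deriv (\<lambda>s. em_remainder K s (a + of_nat n)) x) (at x)" for n x
      using holomorphic_derivI [OF holomorphic_em_remainder open_UNIV UNIV_I] by simp
    show "\<exists>d h. 0 < d \<and> summable h \<and> (\<forall>\<^sub>F n in sequentially.
        \<forall>y\<in>ball x d \<inter> ?S. norm (em_remainder K y (a + of_nat n)) \<le> h n)" if "x \<in> ?S" for x
    proof -
      from that have "- real K < Re x"
        by simp
      then obtain d h where dh: "0 < d" "summable h"
        "\<forall>\<^sub>F n in sequentially. \<forall>y\<in>ball x d. norm (em_remainder K y (a + of_nat n)) \<le> h n"
        using em_remainder_locally_dominated [OF assms] by blast
      from dh(3) have "\<forall>\<^sub>F n in sequentially.
          \<forall>y\<in>ball x d \<inter> ?S. norm (em_remainder K y (a + of_nat n)) \<le> h n"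
        by (rule eventually_mono) blast
      with dh(1,2) show ?thesis
        by blast
    qed
  qed
  then obtain g g' where g: "\<And>x. x \<in> ?S \<Longrightarrow>
      ((\<lambda>n. em_remainder K x (a + of_nat n)) sums g x) \<and> (g has_field_derivative g' x) (at x)"
    by metis
  then have sums: "(\<lambda>n. em_remainder K s (a + of_nat n)) sums em_remainder_sum a K s" if "s \<in> ?S" for s
    using that by (simp add: em_remainder_sum_def sums_iff)
  then show "(\<lambda>n. em_remainder K s (a + of_nat n)) sums em_remainder_sum a K s" if "- real K < Re s"
    using that by simp
  have "g holomorphic_on ?S"
    unfolding holomorphic_on_def field_differentiable_def
    using g has_field_derivative_at_within by blast
  then show "em_remainder_sum a K holomorphic_on ?S"
    by (rule holomorphic_transform) (use g sums sums_unique2 in blast)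
qed

definition em_continuation :: "complex \<Rightarrow> nat \<Rightarrow> complex \<Rightarrow> complex" where
  "em_continuation a K s = em_remainder_sum a K s - (\<Sum>j=1..K. bernoulli_fps $ j * prim_powr_deriv s j a)"

lemma holomorphic_em_continuation:
  assumes "0 < Re a"
  shows "em_continuation a K holomorphic_on {s. - real K < Re s}"
  unfolding em_continuation_def
  by (intro holomorphic_intros em_remainder_series(1) [OF assms]
      holomorphic_on_subset [OF holomorphic_prim_powr_deriv]) auto

lemma shifted_powr_tendsto_0:
  assumes "0 < Re a" "Re e < 0"
  shows "(\<lambda>n. (a + of_nat n) powr e) \<longlonglongrightarrow> 0"
proof (rule Lim_null_comparison)
  have "norm ((a + of_nat n) powr e) \<le> (Re a + real n) powr Re e * exp (\<bar>Im e\<bar> * pi)" for n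
  proof -
    have "Re a + real n \<le> norm (a + of_nat n)"
      using complex_Re_le_cmod [of "a + of_nat n"] by simp
    then have "norm (a + of_nat n) powr Re e \<le> (Re a + real n) powr Re e"
      using assms by (intro powr_mono2') auto
    then show ?thesis
      using norm_powr_le [of "a + of_nat n" e] by (meson exp_gt_zero mult_right_mono less_imp_le order_trans)
  qed
  then show "\<forall>\<^sub>F n in sequentially.
      norm ((a + of_nat n) powr e) \<le> (Re a + real n) powr Re e * exp (\<bar>Im e\<bar> * pi)"
    by simp
  show "(\<lambda>n. (Re a + real n) powr Re e * exp (\<bar>Im e\<bar> * pi)) \<longlonglongrightarrow> 0"
    using assms(2)
    by (intro tendsto_mult_left_zero tendsto_neg_powr
        filterlim_tendsto_add_at_top [OF tendsto_const filterlim_real_sequentially])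
qed

lemma prim_powr_deriv_tendsto_0:
  assumes "0 < Re a" "1 < Re s"
  shows "(\<lambda>n. prim_powr_deriv s j (a + of_nat n)) \<longlonglongrightarrow> 0"
proof -
  have "(\<lambda>n. c * (a + of_nat n) powr (1 - s - of_nat i)) \<longlonglongrightarrow> c * 0" for c i
    using assms by (intro tendsto_mult tendsto_const shifted_powr_tendsto_0) auto
  note powr_lim = this [of "1 / (1 - s)" 0] this [of "(-1) ^ (j - 1) * pochhammer s (j - 1)" j]
  have "s \<noteq> 1"
    using assms(2) by auto
  then show ?thesis
    using powr_lim by (cases "j = 0") (simp_all add: prim_powr_deriv_def)
qed

lemma em_continuation_sums:
  assumes "0 < Re a" "1 < Re s"
  shows "(\<lambda>n. (a + of_nat (Suc n)) powr (- s)) sums (em_continuation a K s + a powr (1 - s) / (s - 1))"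
proof -
  define G where "G v = prim_powr_deriv s 0 v + (\<Sum>j=1..K. bernoulli_fps $ j * prim_powr_deriv s j v)" for v
  have "(\<lambda>n. G (a + of_nat n)) \<longlonglongrightarrow> 0 + (\<Sum>j=1..K. bernoulli_fps $ j * 0)"
    unfolding G_def using assms by (intro tendsto_intros prim_powr_deriv_tendsto_0)
  then have "(\<lambda>n. G (a + of_nat (Suc n)) - G (a + of_nat n)) sums (0 - G (a + of_nat 0))"
    by (intro telescope_sums) simp
  then have "(\<lambda>n. G (a + of_nat (Suc n)) - G (a + of_nat n)) sums (0 - G a)"
    by simp
  then have "(\<lambda>n. em_remainder K s (a + of_nat n) + (G (a + of_nat (Suc n)) - G (a + of_nat n)))
      sums (em_remainder_sum a K s + (0 - G a))"
    using assms by (intro sums_add em_remainder_series(2)) auto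
  moreover have "s \<noteq> 1"
    using assms by auto
  then have "em_remainder_sum a K s + (0 - G a) = em_continuation a K s + a powr (1 - s) / (s - 1)"
    by (simp add: G_def em_continuation_def prim_powr_deriv_def field_simps)
  ultimately show ?thesis
    by (simp add: em_remainder_telescope G_def add_ac)
qed

lemma em_continuation_minus_of_nat:
  assumes "0 < Re a"
  shows "em_continuation a (Suc k) (- of_nat k) = (a ^ Suc k - seki_bernoulli_poly (Suc k) a) / of_nat (Suc k)"
proof -
  have "a \<noteq> 0"
    using assms by auto
  have "em_remainder_sum a (Suc k) (- of_nat k) = 0"
    using assms by (simp add: em_remainder_sum_def em_remainder_minus_of_nat)
  moreover have "(\<Sum>j=1..Suc k. bernoulli_fps $ j * prim_powr_deriv (- of_nat k) j a)
      = (\<Sum>j=1..Suc k. of_nat (Suc k choose j) * seki_bernoulli j * a ^ (Suc k - j) / of_nat (Suc k))"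
    using \<open>a \<noteq> 0\<close> by (intro sum.cong refl bernoulli_fps_times_prim_powr_deriv_minus_of_nat) auto
  moreover have "seki_bernoulli_poly (Suc k) a
      = a ^ Suc k + (\<Sum>j=1..Suc k. of_nat (Suc k choose j) * seki_bernoulli j * a ^ (Suc k - j))"
    by (simp add: seki_bernoulli_poly_def sum.atLeast_Suc_atMost seki_bernoulli_0)
  ultimately show ?thesis
    by (simp add: em_continuation_def sum_divide_distrib diff_divide_distrib)
qed

lemma holomorphic_glue_halfplanes:
  fixes f :: "nat \<Rightarrow> complex \<Rightarrow> complex"
  assumes hol: "\<And>K. f K holomorphic_on {s. - real K < Re s}"
    and agree: "\<And>K K' s. 1 < Re s \<Longrightarrow> f K s = f K' s"
  obtains g where "g holomorphic_on UNIV" "\<And>K s. - real K < Re s \<Longrightarrow> g s = f K s"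
proof -
  have agree_everywhere: "f K s = f K' s" if "- real K < Re s" "- real K' < Re s" for K K' s
  proof -
    define T where "T = {z. - real (min K K') < Re z}"
    have "(2::complex) \<in> {z. 1 < Re z}"
      by simp
    then have nonempty: "{z. 1 < Re z} \<noteq> {}"
      by blast
    have "open T" "connected T"
      unfolding T_def by (simp_all add: open_halfspace_Re_gt convex_connected convex_halfspace_Re_gt)
    have "{z. 1 < Re z} \<subseteq> T" "s \<in> T"
      using that by (auto simp: T_def min_def)
    have "T \<subseteq> {z. - real K < Re z}" "T \<subseteq> {z. - real K' < Re z}"
      by (auto simp: T_def)
    then have "f K holomorphic_on T" "f K' holomorphic_on T"
      by (simp_all add: holomorphic_on_subset [OF hol])
    then show ?thesis
      using analytic_continuation_open [OF open_halfspace_Re_gt \<open>open T\<close> nonempty \<open>connected T\<close>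
          \<open>{z. 1 < Re z} \<subseteq> T\<close>] agree \<open>s \<in> T\<close>
      by blast
  qed
  define K_of where "K_of s = nat \<lceil>- Re s\<rceil> + 1" for s
  have K_of: "- real (K_of s) < Re s" for s
    unfolding K_of_def by linarith
  define g where "g s = f (K_of s) s" for s
  have g_eq: "g s = f K s" if "- real K < Re s" for K s
    unfolding g_def using K_of that by (rule agree_everywhere)
  have "g field_differentiable at s" for s
  proof -
    have "g holomorphic_on {z. - real (K_of s) < Re z}"
      using hol by (rule holomorphic_transform) (simp add: g_eq [symmetric])
    then show ?thesis
      by (rule holomorphic_on_imp_differentiable_at [OF _ open_halfspace_Re_gt]) (simp add: K_of)
  qed
  then have "g holomorphic_on UNIV"
    by (simp add: holomorphic_on_def)
  then show ?thesis
    using g_eq by (rule that)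
qed

lemma summable_norm_shifted_powr:
  assumes "0 < Re a" "1 < Re s"
  shows "summable (\<lambda>n. norm ((a + of_nat (Suc n)) powr (- s)))"
proof (rule summable_comparison_test')
  show "summable (\<lambda>n. real n powr (- Re s) * exp (\<bar>Im s\<bar> * pi))"
    using assms(2) by (intro summable_mult2) (simp add: summable_real_powr_iff)
  show "norm (norm ((a + of_nat (Suc n)) powr (- s))) \<le> real n powr (- Re s) * exp (\<bar>Im s\<bar> * pi)"
    if "1 \<le> n" for n
  proof -
    have "real n \<le> norm (a + of_nat (Suc n))"
      using assms(1) complex_Re_le_cmod [of "a + of_nat (Suc n)"] by simp
    then have n_le: "norm (a + of_nat (Suc n)) powr (- Re s) \<le> real n powr (- Re s)"
      using assms(2) that by (intro powr_mono2') auto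
    have "norm (norm ((a + of_nat (Suc n)) powr (- s)))
        \<le> norm (a + of_nat (Suc n)) powr (- Re s) * exp (\<bar>Im s\<bar> * pi)"
      using norm_powr_le [of "a + of_nat (Suc n)" "- s"] by simp
    also have "\<dots> \<le> real n powr (- Re s) * exp (\<bar>Im s\<bar> * pi)"
      using n_le by (intro mult_right_mono) simp_all
    finally show ?thesis .
  qed
qed

lemma hurwitz_continuation_right_halfplane:
  assumes "0 < Re a"
  obtains R where "R holomorphic_on UNIV"
    "\<And>s. 1 < Re s \<Longrightarrow> (\<lambda>n. (a + of_nat (Suc n)) powr (- s)) sums (R s + a powr (1 - s) / (s - 1))"
    "\<And>k. R (- of_nat k) = (a ^ Suc k - seki_bernoulli_poly (Suc k) a) / of_nat (Suc k)"
proof -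
  have "em_continuation a K s = em_continuation a K' s" if "1 < Re s" for K K' s
    using sums_unique2 [OF em_continuation_sums [OF assms that] em_continuation_sums [OF assms that]]
    by simp
  then obtain R where R: "R holomorphic_on UNIV" "\<And>K s. - real K < Re s \<Longrightarrow> R s = em_continuation a K s"
    using holomorphic_glue_halfplanes [OF holomorphic_em_continuation [OF assms]] by blast
  show ?thesis
  proof (rule that [OF R(1)])
    show "(\<lambda>n. (a + of_nat (Suc n)) powr (- s)) sums (R s + a powr (1 - s) / (s - 1))" if "1 < Re s" for s
      using em_continuation_sums [OF assms that, of 0] R(2) [of 0 s] that by simp
    show "R (- of_nat k) = (a ^ Suc k - seki_bernoulli_poly (Suc k) a) / of_nat (Suc k)" for k
      using em_continuation_minus_of_nat [OF assms] R(2) [of "Suc k"] by simp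
  qed
qed

lemma hurwitz_continuation:
  assumes nonzero: "\<And>m. of_nat (Suc m) + a \<noteq> 0"
  obtains R P where "R holomorphic_on UNIV" "P \<noteq> 0"
    "\<And>s. 1 < Re s \<Longrightarrow> ((\<lambda>m. (of_nat (Suc m) + a) powr (- s)) has_sum (R s + P powr (1 - s) / (s - 1))) UNIV"
    "\<And>k. R (- of_nat k) = (P ^ Suc k - seki_bernoulli_poly (Suc k) a) / of_nat (Suc k)"
proof -
  define N where "N = nat \<lceil>norm a\<rceil> + 1"
  define P where "P = a + of_nat N"
  have "0 < Re P"
    using abs_Re_le_cmod [of a] by (simp add: P_def N_def) linarith
  then obtain R' where R':
    "R' holomorphic_on UNIV"
    "\<And>s. 1 < Re s \<Longrightarrow> (\<lambda>n. (P + of_nat (Suc n)) powr (- s)) sums (R' s + P powr (1 - s) / (s - 1))"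
    "\<And>k. R' (- of_nat k) = (P ^ Suc k - seki_bernoulli_poly (Suc k) P) / of_nat (Suc k)"
    using hurwitz_continuation_right_halfplane by blast
  define f where "f s m = (of_nat (Suc m) + a) powr (- s)" for s m
  have f_shift: "f s (n + N) = (P + of_nat (Suc n)) powr (- s)" for s n
    by (simp add: f_def P_def algebra_simps)
  define R where "R s = (\<Sum>m<N. f s m) + R' s" for s
  show ?thesis
  proof (rule that)
    show "R holomorphic_on UNIV"
      unfolding R_def f_def by (intro holomorphic_intros R'(1))
    show "P \<noteq> 0"
      using \<open>0 < Re P\<close> by auto
  next
    fix s :: complex assume s: "1 < Re s"
    have "(\<lambda>n. f s (n + N)) sums (R' s + P powr (1 - s) / (s - 1))"
      unfolding f_shift using R'(2) [OF s] .
    then have "f s sums (R s + P powr (1 - s) / (s - 1))"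
      by (simp add: sums_iff_shift R_def algebra_simps)
    moreover have "summable (\<lambda>n. norm (f s (n + N)))"
      unfolding f_shift using summable_norm_shifted_powr [OF \<open>0 < Re P\<close> s] .
    then have "summable (\<lambda>n. norm (f s n))"
      by (rule summable_iff_shift [THEN iffD1])
    ultimately show "((\<lambda>m. (of_nat (Suc m) + a) powr (- s)) has_sum (R s + P powr (1 - s) / (s - 1))) UNIV"
      unfolding f_def by (intro norm_summable_imp_has_sum) (simp_all add: f_def)
  next
    fix k
    have "(\<Sum>m<N. f (- of_nat k) m) = (\<Sum>m<N. (of_nat (Suc m) + a) ^ k)"
      using nonzero by (intro sum.cong refl) (simp add: f_def powr_nat')
    also have "\<dots> = (seki_bernoulli_poly (Suc k) P - seki_bernoulli_poly (Suc k) a) / of_nat (Suc k)"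
      unfolding P_def by (rule sum_shifted_powers)
    finally show "R (- of_nat k) = (P ^ Suc k - seki_bernoulli_poly (Suc k) a) / of_nat (Suc k)"
      by (simp add: R_def R'(3) diff_divide_distrib)
  qed
qed

section \<open>Sums over intervals of the index set\<close>

lemma exp_minus_pi_i_of_nat: "exp (- (complex_of_real pi * \<i> * of_nat k)) = (-1) ^ k"
  by (simp add: exp_minus mult.commute [of _ "of_nat k"] exp_of_nat_mult power_inverse [symmetric])

lemma idx_pow_minus_of_nat:
  assumes "idx_val tp tm c \<noteq> 0"
  shows "idx_pow tp tm c (- of_nat k) = idx_val tp tm c ^ k"
proof (cases c)
  case (Neg n)
  with assms have "of_nat n - tm \<noteq> 0"
    by simp
  then have "idx_pow tp tm c (- of_nat k) = (-1) ^ k * (of_nat n - tm) ^ k"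
    using Neg by (simp add: powr_nat' exp_minus_pi_i_of_nat)
  then show ?thesis
    using Neg by (simp flip: power_minus)
qed (use assms in \<open>simp add: powr_nat'\<close>)

lemma holomorphic_idx_pow: "(\<lambda>s. idx_pow tp tm c s) holomorphic_on UNIV"
  by (cases c) (auto intro!: holomorphic_intros)

lemma idx_val_nonzero:
  assumes tp: "tp \<notin> complex_of_real ` {..-1}" and tm: "tm \<notin> complex_of_real ` {1..}"
    and c: "c \<in> idx_between a b"
  shows "idx_val tp tm c \<noteq> 0"
proof (cases c)
  case (Pos n)
  with c have "1 \<le> n"
    by (cases a) (auto simp: idx_between_def)
  then have "complex_of_real (- real n) \<in> complex_of_real ` {..-1}"
    by (intro imageI) simp
  with tp have "tp \<noteq> - of_nat n"
    by auto
  with Pos show ?thesis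
    by (simp add: add_eq_0_iff2 add.commute)
next
  case (Neg n)
  with c have "1 \<le> n"
    by (cases b) (auto simp: idx_between_def)
  then have "complex_of_real (real n) \<in> complex_of_real ` {1..}"
    by (intro imageI) simp
  with tm have "tm \<noteq> of_nat n"
    by auto
  with Neg show ?thesis
    by simp
qed

lemma idx_between_finite_progression:
  assumes "idx_less a b" "\<nexists>n m. a = Pos n \<and> b = Neg m"
  obtains L c where "bij_betw c {..<L} (idx_between a b)"
    "\<And>m. m < L \<Longrightarrow> idx_val tp tm (c m) = of_nat (Suc m) + idx_val tp tm a"
    "idx_val tp tm b = idx_val tp tm a + of_nat L + 1"
proof (cases a; cases b)
  fix n n' assume ab: "a = Pos n" "b = Pos n'"
  with assms have "n < n'"
    by simp
  have "idx_between a b = (\<lambda>m. Pos (n + Suc m)) ` {..<n' - Suc n}"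
  proof (intro set_eqI iffI)
    fix c assume "c \<in> idx_between a b"
    then obtain i where "c = Pos i" "n < i" "i < n'"
      using ab by (cases c) (auto simp: idx_between_def)
    then show "c \<in> (\<lambda>m. Pos (n + Suc m)) ` {..<n' - Suc n}"
      by (intro image_eqI [of _ _ "i - Suc n"]) auto
  qed (auto simp: ab idx_between_def)
  moreover have "inj_on (\<lambda>m. Pos (n + Suc m)) {..<n' - Suc n}"
    by (auto simp: inj_on_def)
  ultimately show thesis
    using \<open>n < n'\<close> by (intro that [of "\<lambda>m. Pos (n + Suc m)" "n' - Suc n"])
      (auto simp: ab bij_betw_def of_nat_diff algebra_simps)
next
  fix n n' assume ab: "a = Neg n" "b = Neg n'"
  with assms have "n' < n"
    by simp
  have "idx_between a b = (\<lambda>m. Neg (n - Suc m)) ` {..<n - Suc n'}"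
  proof (intro set_eqI iffI)
    fix c assume "c \<in> idx_between a b"
    then obtain i where "c = Neg i" "n' < i" "i < n"
      using ab by (cases c) (auto simp: idx_between_def)
    then show "c \<in> (\<lambda>m. Neg (n - Suc m)) ` {..<n - Suc n'}"
      by (intro image_eqI [of _ _ "n - Suc i"]) auto
  qed (auto simp: ab idx_between_def)
  moreover have "inj_on (\<lambda>m. Neg (n - Suc m)) {..<n - Suc n'}"
    by (auto simp: inj_on_def)
  ultimately show thesis
    using \<open>n' < n\<close> by (intro that [of "\<lambda>m. Neg (n - Suc m)" "n - Suc n'"])
      (auto simp: ab bij_betw_def of_nat_diff algebra_simps)
qed (use assms in auto)

lemma interval_zeta_finite:
  assumes tp: "tp \<notin> complex_of_real ` {..-1}" and tm: "tm \<notin> complex_of_real ` {1..}"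
    and "idx_less a b" "\<nexists>n m. a = Pos n \<and> b = Neg m"
  obtains F where "F holomorphic_on UNIV"
    "\<And>s. ((\<lambda>c. idx_pow tp tm c s) has_sum F s) (idx_between a b)"
    "\<And>k. F (- of_nat k) = bernoulli_endpoint_sum k (idx_val tp tm a) (idx_val tp tm b)"
proof -
  obtain L c where c: "bij_betw c {..<L} (idx_between a b)"
    "\<And>m. m < L \<Longrightarrow> idx_val tp tm (c m) = of_nat (Suc m) + idx_val tp tm a"
    "idx_val tp tm b = idx_val tp tm a + of_nat L + 1"
    using idx_between_finite_progression [OF assms(3,4)] by blast
  have "finite (idx_between a b)"
    using bij_betw_finite [OF c(1)] by simp
  show ?thesis
  proof (rule that [of "\<lambda>s. \<Sum>c\<in>idx_between a b. idx_pow tp tm c s"])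
    show "(\<lambda>s. \<Sum>c\<in>idx_between a b. idx_pow tp tm c s) holomorphic_on UNIV"
      by (intro holomorphic_on_sum holomorphic_idx_pow)
    show "((\<lambda>c. idx_pow tp tm c s) has_sum (\<Sum>c\<in>idx_between a b. idx_pow tp tm c s)) (idx_between a b)" for s
      using \<open>finite (idx_between a b)\<close> by (rule has_sum_finite)
    fix k
    have "(\<Sum>c\<in>idx_between a b. idx_pow tp tm c (- of_nat k)) = (\<Sum>c\<in>idx_between a b. idx_val tp tm c ^ k)"
      using idx_val_nonzero [OF tp tm] by (intro sum.cong refl idx_pow_minus_of_nat) blast
    also have "\<dots> = (\<Sum>m<L. (of_nat (Suc m) + idx_val tp tm a) ^ k)"
      using c(2) by (simp add: sum.reindex_bij_betw [OF c(1), symmetric])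
    also have "\<dots> = bernoulli_endpoint_sum k (idx_val tp tm a) (idx_val tp tm b)"
      using c(3) by (rule sum_shifted_powers_eq_bernoulli_endpoint_sum)
    finally show "(\<Sum>c\<in>idx_between a b. idx_pow tp tm c (- of_nat k))
        = bernoulli_endpoint_sum k (idx_val tp tm a) (idx_val tp tm b)" .
  qed
qed

lemma idx_between_Pos_Neg:
  "idx_between (Pos n) (Neg m) = range (\<lambda>j. Pos (n + Suc j)) \<union> range (\<lambda>j. Neg (m + Suc j))"
proof (intro set_eqI iffI)
  fix c assume c: "c \<in> idx_between (Pos n) (Neg m)"
  show "c \<in> range (\<lambda>j. Pos (n + Suc j)) \<union> range (\<lambda>j. Neg (m + Suc j))"
  proof (cases c)
    case (Pos i)
    with c have "i = n + Suc (i - Suc n)"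
      by (simp add: idx_between_def)
    with Pos show ?thesis
      by blast
  next
    case (Neg i)
    with c have "i = m + Suc (i - Suc m)"
      by (simp add: idx_between_def)
    with Neg show ?thesis
      by blast
  qed
qed (auto simp: idx_between_def)

lemma has_sum_idx_pow_Pos_Neg:
  assumes "((\<lambda>j. (of_nat (Suc j) + (of_nat n + tp)) powr (- s)) has_sum X) UNIV"
    and "((\<lambda>j. (of_nat (Suc j) + (of_nat m - tm)) powr (- s)) has_sum Y) UNIV"
  shows "((\<lambda>c. idx_pow tp tm c s) has_sum (X + exp (complex_of_real pi * \<i> * s) * Y))
           (idx_between (Pos n) (Neg m))"
proof -
  have "(\<lambda>c. idx_pow tp tm c s) \<circ> (\<lambda>j. Pos (n + Suc j)) = (\<lambda>j. (of_nat (Suc j) + (of_nat n + tp)) powr (- s))"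
    by (auto simp: algebra_simps)
  then have "((\<lambda>c. idx_pow tp tm c s) has_sum X) (range (\<lambda>j. Pos (n + Suc j)))"
    using assms(1) by (simp add: has_sum_reindex inj_on_def)
  moreover have "(\<lambda>c. idx_pow tp tm c s) \<circ> (\<lambda>j. Neg (m + Suc j))
      = (\<lambda>j. exp (complex_of_real pi * \<i> * s) * (of_nat (Suc j) + (of_nat m - tm)) powr (- s))"
    by (auto simp: algebra_simps)
  then have "((\<lambda>c. idx_pow tp tm c s) has_sum (exp (complex_of_real pi * \<i> * s) * Y))
      (range (\<lambda>j. Neg (m + Suc j)))"
    using has_sum_cmult_right [OF assms(2)] by (simp add: has_sum_reindex inj_on_def)
  ultimately show ?thesis
    unfolding idx_between_Pos_Neg by (rule has_sum_Un_disjoint) auto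
qed

lemma removable_pole_at_1:
  assumes "h holomorphic_on UNIV" "h 1 = 0"
  obtains q where "q holomorphic_on UNIV" "\<And>z. z \<noteq> 1 \<Longrightarrow> q z = h z / (z - 1)"
proof
  show "(\<lambda>z. if z = 1 then deriv h 1 else (h z - h 1) / (z - 1)) holomorphic_on UNIV"
    using assms(1) by (rule pole_lemma) simp
qed (simp add: assms(2))

lemma interval_zeta_Pos_Neg:
  assumes tp: "tp \<notin> complex_of_real ` {..-1}" and tm: "tm \<notin> complex_of_real ` {1..}"
    and ab: "a = Pos n" "b = Neg m"
  obtains F where "F holomorphic_on UNIV"
    "\<And>s. 1 < Re s \<Longrightarrow> ((\<lambda>c. idx_pow tp tm c s) has_sum F s) (idx_between a b)"
    "\<And>k. F (- of_nat k) = bernoulli_endpoint_sum k (idx_val tp tm a) (idx_val tp tm b)"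
proof -
  define a1 where "a1 = of_nat n + tp"
  define a2 where "a2 = of_nat m - tm"
  have "of_nat (Suc j) + a1 \<noteq> 0" for j
    using idx_val_nonzero [OF tp tm, of "Pos (n + Suc j)" "Pos n" "Neg m"]
    by (simp add: a1_def idx_between_def algebra_simps)
  then obtain R1 P1 where R1: "R1 holomorphic_on UNIV" "P1 \<noteq> 0"
      "\<And>s. 1 < Re s \<Longrightarrow> ((\<lambda>j. (of_nat (Suc j) + a1) powr (- s)) has_sum (R1 s + P1 powr (1 - s) / (s - 1))) UNIV"
      "\<And>k. R1 (- of_nat k) = (P1 ^ Suc k - seki_bernoulli_poly (Suc k) a1) / of_nat (Suc k)"
    using hurwitz_continuation by blast
  have "of_nat (Suc j) + a2 \<noteq> 0" for j
    using idx_val_nonzero [OF tp tm, of "Neg (m + Suc j)" "Pos n" "Neg m"]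
    by (simp add: a2_def idx_between_def algebra_simps)
  then obtain R2 P2 where R2: "R2 holomorphic_on UNIV" "P2 \<noteq> 0"
      "\<And>s. 1 < Re s \<Longrightarrow> ((\<lambda>j. (of_nat (Suc j) + a2) powr (- s)) has_sum (R2 s + P2 powr (1 - s) / (s - 1))) UNIV"
      "\<And>k. R2 (- of_nat k) = (P2 ^ Suc k - seki_bernoulli_poly (Suc k) a2) / of_nat (Suc k)"
    using hurwitz_continuation by blast
  define E where "E s = exp (complex_of_real pi * \<i> * s)" for s
  define h where "h s = P1 powr (1 - s) + E s * P2 powr (1 - s)" for s
  have "h holomorphic_on UNIV"
    unfolding h_def E_def by (intro holomorphic_intros)
  moreover have "h 1 = 0" \<comment> \<open>the poles of the two halves cancel because \<open>E 1 = -1\<close>\<close>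
    using R1(2) R2(2) by (simp add: h_def E_def)
  ultimately obtain pole where pole: "pole holomorphic_on UNIV" "\<And>z. z \<noteq> 1 \<Longrightarrow> pole z = h z / (z - 1)"
    using removable_pole_at_1 by blast
  define F where "F s = R1 s + E s * R2 s + pole s" for s
  show ?thesis
  proof (rule that [of F])
    show "F holomorphic_on UNIV"
      unfolding F_def [abs_def] E_def by (intro holomorphic_intros R1(1) R2(1) pole(1))
  next
    fix s :: complex assume s: "1 < Re s"
    then have "s \<noteq> 1"
      by auto
    have "((\<lambda>c. idx_pow tp tm c s) has_sum
        (R1 s + P1 powr (1 - s) / (s - 1) + E s * (R2 s + P2 powr (1 - s) / (s - 1)))) (idx_between a b)"
      unfolding ab E_def using R1(3) [OF s, unfolded a1_def] R2(3) [OF s, unfolded a2_def]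
      by (rule has_sum_idx_pow_Pos_Neg)
    also have "R1 s + P1 powr (1 - s) / (s - 1) + E s * (R2 s + P2 powr (1 - s) / (s - 1)) = F s"
      using pole(2) [OF \<open>s \<noteq> 1\<close>] by (simp add: F_def h_def add_divide_distrib ring_distribs)
    finally show "((\<lambda>c. idx_pow tp tm c s) has_sum F s) (idx_between a b)" .
  next
    fix k
    have "P powr (1 - (- of_nat k)) = P ^ Suc k" if "P \<noteq> 0" for P :: complex
      using powr_nat' [of P "Suc k"] that by (simp add: add.commute)
    then have h_k: "h (- of_nat k) = P1 ^ Suc k + (-1) ^ k * P2 ^ Suc k"
      using R1(2) R2(2) by (simp add: h_def E_def exp_minus_pi_i_of_nat)
    have "Re (- of_nat k :: complex) \<noteq> Re 1"
      by simp
    then have "pole (- of_nat k) = h (- of_nat k) / (- of_nat k - 1)"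
      by (metis pole(2))
    also have "(- of_nat k - 1 :: complex) = - of_nat (Suc k)"
      by simp
    also have "h (- of_nat k) / - of_nat (Suc k) = - (P1 ^ Suc k + (-1) ^ k * P2 ^ Suc k) / of_nat (Suc k)"
      by (simp only: h_k divide_minus_right minus_divide_left)
    finally have "F (- of_nat k) = (P1 ^ Suc k - seki_bernoulli_poly (Suc k) a1) / of_nat (Suc k)
        + (-1) ^ k * ((P2 ^ Suc k - seki_bernoulli_poly (Suc k) a2) / of_nat (Suc k))
        + - (P1 ^ Suc k + (-1) ^ k * P2 ^ Suc k) / of_nat (Suc k)"
      by (simp add: F_def E_def exp_minus_pi_i_of_nat R1(4) R2(4) del: of_nat_Suc)
    also have "\<dots> = ((-1) ^ Suc k * seki_bernoulli_poly (Suc k) a2 - seki_bernoulli_poly (Suc k) a1)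
        / of_nat (Suc k)"
      by (simp add: field_simps del: of_nat_Suc)
    also have "\<dots> = bernoulli_endpoint_sum k (idx_val tp tm a) (idx_val tp tm b)"
      by (simp add: bernoulli_endpoint_sum_eq ab a1_def a2_def)
    finally show "F (- of_nat k) = bernoulli_endpoint_sum k (idx_val tp tm a) (idx_val tp tm b)" .
  qed
qed

theorem lemma3p3:
  fixes tp tm :: complex and a b :: idx
  assumes tp: "tp \<notin> complex_of_real ` {..-1}"
    and tm: "tm \<notin> complex_of_real ` {1..}"
    and ab: "idx_less a b"
  shows "\<exists>F. F holomorphic_on UNIV \<and>
           (\<forall>s. 1 < Re s \<longrightarrow> ((\<lambda>c. idx_pow tp tm c s) has_sum F s) (idx_between a b)) \<and>
           (\<forall>k::nat. F (- of_nat k) =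
              1 / of_nat (k + 1) *
              (\<Sum>j = 0..k + 1. of_nat ((k + 1) choose j) * seki_bernoulli j *
                 ((-1) ^ j * idx_val tp tm b ^ (k + 1 - j) - idx_val tp tm a ^ (k + 1 - j))))"
proof -
  obtain F where F: "F holomorphic_on UNIV"
    "\<And>s. 1 < Re s \<Longrightarrow> ((\<lambda>c. idx_pow tp tm c s) has_sum F s) (idx_between a b)"
    "\<And>k. F (- of_nat k) = bernoulli_endpoint_sum k (idx_val tp tm a) (idx_val tp tm b)"
  proof (cases "\<exists>n m. a = Pos n \<and> b = Neg m")
    case True
    then obtain n m where "a = Pos n" "b = Neg m"
      by blast
    then show thesis
      using that by (rule interval_zeta_Pos_Neg [OF tp tm])
  next
    case False
    obtain G where G: "G holomorphic_on UNIV"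
      "\<And>s. ((\<lambda>c. idx_pow tp tm c s) has_sum G s) (idx_between a b)"
      "\<And>k. G (- of_nat k) = bernoulli_endpoint_sum k (idx_val tp tm a) (idx_val tp tm b)"
      using interval_zeta_finite [OF tp tm ab False] by blast
    show thesis
      by (rule that [OF G(1) G(2) G(3)])
  qed
  show ?thesis
  proof (intro exI [of _ F] conjI allI impI)
    show "F holomorphic_on UNIV"
      by (fact F(1))
    show "((\<lambda>c. idx_pow tp tm c s) has_sum F s) (idx_between a b)" if "1 < Re s" for s
      using that by (rule F(2))
    show "F (- of_nat k) = 1 / of_nat (k + 1) *
        (\<Sum>j = 0..k + 1. of_nat ((k + 1) choose j) * seki_bernoulli j *
          ((-1) ^ j * idx_val tp tm b ^ (k + 1 - j) - idx_val tp tm a ^ (k + 1 - j)))" for k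
      using F(3) [of k] unfolding bernoulli_endpoint_sum_def .
  qed
qed

end
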